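(* Let $\mathcal{C}\subset\mathbb{R}^n$ be a bounded open convex set with Hilbert distance $d_{\mathcal{C}}$ and Finsler norm $\|\cdot\|_{\mathcal{C}}$, let $x\in\mathcal{C}$ and $R>0$. Then $$\left(\frac{e^{2R}-1}{2Re^{2R}}\right)^n\leq\frac{\mathrm{vol}_e B_R(x)}{\mathrm{vol}_e TB_R(x)}\leq\left(\frac{e^{2R}-1}{2R}\right)^n,$$ where $\mathrm{vol}_e$ is the Euclidean volume.
   Context: $d_{\mathcal{C}}(p,q)=\frac12\ln\Big(\frac{\|q-a\|_e}{\|p-a\|_e}\cdot\frac{\|p-b\|_e}{\|q-b\|_e}\Big)$, where the line through distinct $p,q$ meets $\partial\mathcal{C}$ in $a,b$ with $a,p,q,b$ in this order. Finsler norm $\|u\|_{\mathcal{C}}=\frac12\|u\|_e\big(\frac1{\|p-p^+\|_e}+\frac1{\|p-p^-\|_e}\big)$ for $u\in T_p\mathcal{C}=\mathbb{R}^n$, $p^\pm$ the intersections of the line $p+\mathbb{R}u$ with $\partial\mathcal{C}$. $B_R(x)=\{y\in\mathcal{C}:d_{\mathcal{C}}(x,y)<R\}$ and $TB_R(x)=\{u\in\mathbb{R}^n:\|u\|_{\mathcal{C}}<R\}$ (norm taken at the point $x$), both subsets of $\mathbb{R}^n$. *)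

theory Defs
  imports "HOL-Analysis.Analysis"
begin

definition line_tmax :: "'a::euclidean_space set \<Rightarrow> 'a \<Rightarrow> 'a \<Rightarrow> real" where
  "line_tmax C p u = Sup {t. p + t *\<^sub>R u \<in> C}"

definition line_tmin :: "'a::euclidean_space set \<Rightarrow> 'a \<Rightarrow> 'a \<Rightarrow> real" where
  "line_tmin C p u = Inf {t. p + t *\<^sub>R u \<in> C}"

text \<open>Hilbert distance: a = endpoint beyond p, b = endpoint beyond q, order a,p,q,b.\<close>
definition hilbert_dist :: "'a::euclidean_space set \<Rightarrow> 'a \<Rightarrow> 'a \<Rightarrow> real" where
  "hilbert_dist C p q =
     (if p = q then 0 else
        (let a = p + line_tmin C p (q - p) *\<^sub>R (q - p);
             b = p + line_tmax C p (q - p) *\<^sub>R (q - p)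
         in ln ((norm (q - a) / norm (p - a)) * (norm (p - b) / norm (q - b))) / 2))"

definition finsler_norm :: "'a::euclidean_space set \<Rightarrow> 'a \<Rightarrow> 'a \<Rightarrow> real" where
  "finsler_norm C p u =
     (if u = 0 then 0 else
        (let pp = p + line_tmax C p u *\<^sub>R u;
             pm = p + line_tmin C p u *\<^sub>R u
         in norm u * (1 / norm (p - pp) + 1 / norm (p - pm)) / 2))"

definition hilbert_ball :: "'a::euclidean_space set \<Rightarrow> 'a \<Rightarrow> real \<Rightarrow> 'a set" where
  "hilbert_ball C x R = {y \<in> C. hilbert_dist C x y < R}"

definition tangent_ball :: "'a::euclidean_space set \<Rightarrow> 'a \<Rightarrow> real \<Rightarrow> 'a set" where
  "tangent_ball C x R = {u. finsler_norm C x u < R}"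

end

theory Submission
  imports Defs
begin

text \<open>Let g be the Minkowski gauge of C - x, i.e. the reciprocal of the parameter at which the
  ray x + t v leaves C; it is positively homogeneous. The Finsler norm at x is (g v + g (-v)) / 2,
  and with k = exp (2 R) the point x + v lies in the Hilbert ball iff g (-v) + k g v < k - 1.
  Since g v + g (-v) \<le> g (-v) + k g v \<le> k (g v + g (-v)), the Hilbert ball contains the image
  of the tangent ball under the homothety of centre x and ratio (k - 1) / (2 R k), and is contained
  in its image under the homothety of ratio (k - 1) / (2 R); Lebesgue measure scales by the
  n-th power of the ratio.\<close>

lemma line_tmin_eq_uminus_line_tmax: "line_tmin C p u = - line_tmax C p (- u)"
proof -
  have "uminus ` {t. p + t *\<^sub>R u \<in> C} = {t. p + t *\<^sub>R (- u) \<in> C}"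
    by (auto intro: image_eqI[where x = "- t" for t])
  then show ?thesis by (simp add: line_tmin_def line_tmax_def Inf_real_def)
qed

lemma open_sublevel_add:
  fixes f g :: "'a::topological_space \<Rightarrow> real"
  assumes "\<And>c. open {v. f v < c}" and "\<And>c. open {v. g v < c}"
  shows "open {v. f v + g v < c}"
proof -
  have sublevel: "{v. f v + g v < c} = (\<Union>d. {v. f v < d} \<inter> {v. g v < c - d})"
  proof (intro equalityI subsetI)
    fix v assume "v \<in> {v. f v + g v < c}"
    then have "v \<in> {v. f v < (c + f v - g v) / 2} \<inter> {v. g v < c - (c + f v - g v) / 2}"
      by (auto simp: field_simps)
    then show "v \<in> (\<Union>d. {v. f v < d} \<inter> {v. g v < c - d})" by blast
  qed auto
  show ?thesis
    unfolding sublevel by (intro open_UN ballI open_Int assms)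
qed

lemma measure_ratio_between_homothetic_copies:
  fixes S T :: "'a::euclidean_space set" and x :: 'a
  assumes "open S" and T: "open T" "bounded T" "T \<noteq> {}" and "0 < a" "0 < b"
    and inner: "(\<lambda>u. x + a *\<^sub>R u) ` T \<subseteq> S"
    and outer: "S \<subseteq> (\<lambda>u. x + b *\<^sub>R u) ` T"
  shows "a ^ DIM('a) \<le> measure lebesgue S / measure lebesgue T
    \<and> measure lebesgue S / measure lebesgue T \<le> b ^ DIM('a)"
proof -
  have bounded_copy: "bounded ((\<lambda>u. x + c *\<^sub>R u) ` T)" for c
    using bounded_translation[OF bounded_scaling[OF T(2)]] by (simp add: image_image)
  have homothetic: "(\<lambda>u. x + c *\<^sub>R u) ` T \<in> lmeasurable
      \<and> measure lebesgue ((\<lambda>u. x + c *\<^sub>R u) ` T) = c ^ DIM('a) * measure lebesgue T"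
    if "0 < c" for c
  proof
    show "(\<lambda>u. x + c *\<^sub>R u) ` T \<in> lmeasurable"
      using bounded_copy open_affinity[OF T(1)] that by (simp add: lmeasurable_open)
    show "measure lebesgue ((\<lambda>u. x + c *\<^sub>R u) ` T) = c ^ DIM('a) * measure lebesgue T"
      using measure_lebesgue_affine[of c x T] that by (simp add: add.commute)
  qed
  have "0 < measure lebesgue T"
  proof -
    obtain t r where "0 < r" "ball t r \<subseteq> T"
      using T(1,3) open_contains_ball by blast
    then have "0 < measure lebesgue (ball t r)"
      using content_ball_pos by simp
    also have "\<dots> \<le> measure lebesgue T"
      using \<open>ball t r \<subseteq> T\<close> T by (intro measure_mono_fmeasurable) (auto simp: lmeasurable_open)
    finally show ?thesis .
  qed
  moreover have "S \<in> lmeasurable"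
    using bounded_subset[OF bounded_copy outer] \<open>open S\<close> by (rule lmeasurable_open)
  moreover have "a ^ DIM('a) * measure lebesgue T \<le> measure lebesgue S"
    using inner homothetic[OF \<open>0 < a\<close>] \<open>S \<in> lmeasurable\<close>
    by (metis fmeasurableD measure_mono_fmeasurable)
  moreover have "measure lebesgue S \<le> b ^ DIM('a) * measure lebesgue T"
    using outer homothetic[OF \<open>0 < b\<close>] \<open>S \<in> lmeasurable\<close>
    by (metis fmeasurableD measure_mono_fmeasurable)
  ultimately show ?thesis
    by (simp add: pos_le_divide_eq pos_divide_le_eq)
qed

text \<open>The Minkowski functional of C - x. At v = 0 the parameter set is unbounded and
  line_tmax is junk, hence the explicit case.\<close>

definition minkowski_gauge :: "'a::euclidean_space set \<Rightarrow> 'a \<Rightarrow> 'a \<Rightarrow> real" where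
  "minkowski_gauge C x v = (if v = 0 then 0 else inverse (line_tmax C x v))"

context
  fixes C :: "'a::euclidean_space set" and x :: 'a
  assumes C: "bounded C" "open C" "convex C" and x: "x \<in> C"
begin

lemma
  assumes "v \<noteq> 0"
  shows line_tmax_pos: "0 < line_tmax C x v"
    and ray_mem_iff_less_line_tmax:
      "0 < t \<Longrightarrow> x + t *\<^sub>R v \<in> C \<longleftrightarrow> t < line_tmax C x v"
proof -
  define S where "S = {t. x + t *\<^sub>R v \<in> C}"
  have S_eq: "S = (\<lambda>t. x + t *\<^sub>R v) -` C"
    by (auto simp: S_def)
  have "open S"
    unfolding S_eq by (rule continuous_open_vimage[OF C(2)]) (intro continuous_intros)
  obtain B where B: "\<And>y. y \<in> C \<Longrightarrow> norm y \<le> B"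
    using C(1) bounded_pos by blast
  have "t \<le> 2 * B / norm v" if "t \<in> S" for t
  proof -
    have "t * norm v \<le> norm (x + t *\<^sub>R v - x)"
      by (simp add: mult_right_mono)
    also have "\<dots> \<le> norm (x + t *\<^sub>R v) + norm x"
      by (rule norm_triangle_ineq4)
    also have "\<dots> \<le> 2 * B"
      using B[OF x] B[of "x + t *\<^sub>R v"] that by (simp add: S_def)
    finally show ?thesis
      using assms by (simp add: pos_le_divide_eq)
  qed
  then have "bdd_above S"
    by (rule bdd_aboveI)
  have below_Sup: "t < Sup S" if "t \<in> S" for t
  proof -
    obtain e where "0 < e" and "ball t e \<subseteq> S"
      using \<open>open S\<close> \<open>t \<in> S\<close> by (rule openE)
    moreover have "t + e / 2 \<in> ball t e"
      using \<open>0 < e\<close> by (simp add: dist_real_def)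
    ultimately have "t + e / 2 \<in> S"
      by blast
    then have "t + e / 2 \<le> Sup S"
      using \<open>bdd_above S\<close> by (rule cSup_upper)
    then show ?thesis
      using \<open>0 < e\<close> by linarith
  qed
  have "0 \<in> S"
    using x by (simp add: S_def)
  then show "0 < line_tmax C x v"
    using below_Sup by (simp add: line_tmax_def S_def)
  assume "0 < t"
  show "x + t *\<^sub>R v \<in> C \<longleftrightarrow> t < line_tmax C x v"
  proof
    assume "x + t *\<^sub>R v \<in> C"
    then show "t < line_tmax C x v"
      using below_Sup by (simp add: line_tmax_def S_def)
  next
    assume "t < line_tmax C x v"
    then obtain s where "s \<in> S" "t < s"
      using less_cSup_iff[OF _ \<open>bdd_above S\<close>] \<open>0 \<in> S\<close>
      unfolding line_tmax_def S_def[symmetric] by blast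
    then have s: "x + s *\<^sub>R v \<in> C" "t < s"
      by (simp_all add: S_def)
    then have "(1 - t / s) *\<^sub>R x + (t / s) *\<^sub>R (x + s *\<^sub>R v) \<in> C"
      using \<open>0 < t\<close> x by (intro convexD[OF C(3)]) simp_all
    moreover have "(1 - t / s) *\<^sub>R x + (t / s) *\<^sub>R (x + s *\<^sub>R v) = x + t *\<^sub>R v"
      using \<open>0 < t\<close> s(2) by (simp add: algebra_simps)
    ultimately show "x + t *\<^sub>R v \<in> C"
      by simp
  qed
qed

lemma minkowski_gauge_less_iff:
  assumes "0 < a"
  shows "minkowski_gauge C x v < a \<longleftrightarrow> x + inverse a *\<^sub>R v \<in> C"
proof (cases "v = 0")
  case True
  then show ?thesis
    using assms x by (simp add: minkowski_gauge_def)
next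
  case False
  have "x + inverse a *\<^sub>R v \<in> C \<longleftrightarrow> inverse a < line_tmax C x v"
    using assms False by (simp add: ray_mem_iff_less_line_tmax)
  also have "\<dots> \<longleftrightarrow> inverse (line_tmax C x v) < a"
    using assms line_tmax_pos[OF False] by (simp add: field_simps)
  finally show ?thesis
    using False by (simp add: minkowski_gauge_def)
qed

lemma minkowski_gauge_pos: "v \<noteq> 0 \<Longrightarrow> 0 < minkowski_gauge C x v"
  using line_tmax_pos by (simp add: minkowski_gauge_def)

lemma minkowski_gauge_nonneg: "0 \<le> minkowski_gauge C x v"
  using minkowski_gauge_pos[of v] by (cases "v = 0") (simp_all add: minkowski_gauge_def)

lemma minkowski_gauge_scaleR:
  assumes "0 < s"
  shows "minkowski_gauge C x (s *\<^sub>R v) = s * minkowski_gauge C x v"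
proof (cases "v = 0")
  case True
  then show ?thesis
    by (simp add: minkowski_gauge_def)
next
  case False
  have less_iff: "minkowski_gauge C x (s *\<^sub>R v) < a \<longleftrightarrow> s * minkowski_gauge C x v < a"
    if "0 < a" for a
  proof -
    have "minkowski_gauge C x (s *\<^sub>R v) < a \<longleftrightarrow> x + inverse (a / s) *\<^sub>R v \<in> C"
      using that assms by (simp add: minkowski_gauge_less_iff inverse_eq_divide)
    also have "\<dots> \<longleftrightarrow> minkowski_gauge C x v < a / s"
      using that assms by (simp add: minkowski_gauge_less_iff)
    also have "\<dots> \<longleftrightarrow> s * minkowski_gauge C x v < a"
      using assms by (simp add: pos_less_divide_eq mult.commute)
    finally show ?thesis .
  qed
  have "0 < minkowski_gauge C x (s *\<^sub>R v)" "0 < s * minkowski_gauge C x v"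
    using False assms by (simp_all add: minkowski_gauge_pos)
  then have "\<not> minkowski_gauge C x (s *\<^sub>R v) < s * minkowski_gauge C x v"
    and "\<not> s * minkowski_gauge C x v < minkowski_gauge C x (s *\<^sub>R v)"
    using less_iff by auto
  then show ?thesis
    by linarith
qed

lemma open_minkowski_gauge_sublevel: "open {v. minkowski_gauge C x v < c}"
proof (cases "0 < c")
  case True
  then have "{v. minkowski_gauge C x v < c} = (\<lambda>v. x + inverse c *\<^sub>R v) -` C"
    by (auto simp: minkowski_gauge_less_iff)
  then show ?thesis
    using continuous_open_vimage[OF C(2), of "\<lambda>v. x + inverse c *\<^sub>R v"] by (simp add: continuous_intros)
next
  case False
  then have "\<not> minkowski_gauge C x v < c" for v
    using minkowski_gauge_nonneg[of v] by linarith
  then have "{v. minkowski_gauge C x v < c} = {}"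
    by blast
  then show ?thesis
    by simp
qed

lemma bounded_minkowski_gauge_sublevel: "bounded {v. minkowski_gauge C x v < c}"
proof (cases "0 < c")
  case True
  have "{v. minkowski_gauge C x v < c} \<subseteq> (\<lambda>y. c *\<^sub>R y) ` (\<lambda>y. y - x) ` C"
  proof
    fix v assume "v \<in> {v. minkowski_gauge C x v < c}"
    then have "x + inverse c *\<^sub>R v \<in> C"
      using True by (simp add: minkowski_gauge_less_iff)
    moreover have "v = c *\<^sub>R (x + inverse c *\<^sub>R v - x)"
      using True by simp
    ultimately show "v \<in> (\<lambda>y. c *\<^sub>R y) ` (\<lambda>y. y - x) ` C"
      by blast
  qed
  then show ?thesis
    by (rule bounded_subset[OF bounded_scaling[OF bounded_translation_minus[OF C(1)]]])
next
  case False
  then have "\<not> minkowski_gauge C x v < c" for v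
    using minkowski_gauge_nonneg[of v] by linarith
  then have "{v. minkowski_gauge C x v < c} = {}"
    by blast
  then show ?thesis
    by simp
qed

lemma finsler_norm_eq_minkowski_gauge:
  "finsler_norm C x v = (minkowski_gauge C x v + minkowski_gauge C x (- v)) / 2"
proof (cases "v = 0")
  case True
  then show ?thesis
    by (simp add: finsler_norm_def minkowski_gauge_def)
next
  case False
  then have "0 < line_tmax C x v" "0 < line_tmax C x (- v)"
    by (simp_all add: line_tmax_pos)
  then show ?thesis
    using False
    by (simp add: finsler_norm_def minkowski_gauge_def line_tmin_eq_uminus_line_tmax Let_def field_simps)
qed

lemma hilbert_dist_eq_minkowski_gauge:
  assumes "v \<noteq> 0" and "x + v \<in> C"
  shows "hilbert_dist C x (x + v)
    = ln ((1 + minkowski_gauge C x (- v)) / (1 - minkowski_gauge C x v)) / 2"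
proof -
  define P M where "P = line_tmax C x v" and "M = line_tmax C x (- v)"
  have "1 < P"
    using assms ray_mem_iff_less_line_tmax[of v 1] by (simp add: P_def)
  moreover have "0 < M"
    using assms(1) by (simp add: M_def line_tmax_pos)
  moreover have "norm (x + v - (x + (- M) *\<^sub>R v)) = (1 + M) * norm v"
    using \<open>0 < M\<close> norm_scaleR[of "1 + M" v] by (simp add: algebra_simps)
  moreover have "norm (x + v - (x + P *\<^sub>R v)) = (P - 1) * norm v"
    using \<open>1 < P\<close> norm_scaleR[of "P - 1" v] by (simp add: algebra_simps norm_minus_commute)
  ultimately show ?thesis
    using assms(1)
    by (simp add: hilbert_dist_def minkowski_gauge_def line_tmin_eq_uminus_line_tmax Let_def
        flip: P_def M_def) (simp add: field_simps)
qed

lemma mem_hilbert_ball_iff_minkowski_gauge: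
  "x + v \<in> hilbert_ball C x R
    \<longleftrightarrow> minkowski_gauge C x (- v) + exp (2 * R) * minkowski_gauge C x v < exp (2 * R) - 1"
proof (cases "v = 0")
  case True
  then show ?thesis
    using x by (simp add: hilbert_ball_def hilbert_dist_def minkowski_gauge_def)
next
  case False
  define a b k where "a = minkowski_gauge C x v" and "b = minkowski_gauge C x (- v)"
    and "k = exp (2 * R)"
  have "0 < a" "0 < b" "0 < k"
    using False by (simp_all add: a_def b_def k_def minkowski_gauge_pos)
  have mem_C: "x + v \<in> C \<longleftrightarrow> a < 1"
    using minkowski_gauge_less_iff[of 1 v] by (simp add: a_def)
  show ?thesis
  proof (cases "a < 1")
    case True
    then have "x + v \<in> hilbert_ball C x R \<longleftrightarrow> ln ((1 + b) / (1 - a)) < 2 * R"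
      using False mem_C
      by (auto simp: hilbert_ball_def hilbert_dist_eq_minkowski_gauge a_def b_def)
    also have "\<dots> \<longleftrightarrow> (1 + b) / (1 - a) < k"
    proof -
      have "0 < (1 + b) / (1 - a)"
        using True \<open>0 < b\<close> by simp
      then show ?thesis
        using ln_less_cancel_iff[of "(1 + b) / (1 - a)" k] \<open>0 < k\<close> by (simp add: k_def)
    qed
    also have "\<dots> \<longleftrightarrow> b + k * a < k - 1"
      using True by (simp add: divide_less_eq algebra_simps)
    finally show ?thesis
      by (simp add: a_def b_def k_def)
  next
    case False
    then have "\<not> b + k * a < k - 1"
      using \<open>0 < k\<close> \<open>0 < b\<close> mult_left_mono[of 1 a k] by linarith
    then show ?thesis
      using False mem_C unfolding a_def b_def k_def by (simp add: hilbert_ball_def)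
  qed
qed

lemma tangent_ball_eq_minkowski_gauge:
  "tangent_ball C x R = {v. minkowski_gauge C x v + minkowski_gauge C x (- v) < 2 * R}"
  by (auto simp: tangent_ball_def finsler_norm_eq_minkowski_gauge)

lemma open_minkowski_gauge_uminus_sublevel: "open {v. minkowski_gauge C x (- v) < c}"
proof -
  have "{v. minkowski_gauge C x (- v) < c} = uminus -` {v. minkowski_gauge C x v < c}"
    by auto
  then show ?thesis
    using continuous_open_vimage[OF open_minkowski_gauge_sublevel, of uminus] by simp
qed

lemma open_tangent_ball: "open (tangent_ball C x R)"
  unfolding tangent_ball_eq_minkowski_gauge
  by (intro open_sublevel_add open_minkowski_gauge_sublevel open_minkowski_gauge_uminus_sublevel)

lemma bounded_tangent_ball: "bounded (tangent_ball C x R)"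
proof (rule bounded_subset[OF bounded_minkowski_gauge_sublevel])
  show "tangent_ball C x R \<subseteq> {v. minkowski_gauge C x v < 2 * R}"
  proof
    fix v assume "v \<in> tangent_ball C x R"
    then show "v \<in> {v. minkowski_gauge C x v < 2 * R}"
      using minkowski_gauge_nonneg[of "- v"] by (simp add: tangent_ball_eq_minkowski_gauge)
  qed
qed

lemma open_hilbert_ball: "open (hilbert_ball C x R)"
proof -
  define k where "k = exp (2 * R)"
  have "{v. k * minkowski_gauge C x v < c} = {v. minkowski_gauge C x v < c / k}" for c
    by (simp add: k_def pos_less_divide_eq mult.commute)
  then have sublevel_open: "open {v. minkowski_gauge C x (- v) + k * minkowski_gauge C x v < k - 1}"
    by (intro open_sublevel_add open_minkowski_gauge_uminus_sublevel) (simp add: open_minkowski_gauge_sublevel)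
  have "y \<in> hilbert_ball C x R
      \<longleftrightarrow> y - x \<in> {v. minkowski_gauge C x (- v) + k * minkowski_gauge C x v < k - 1}" for y
    using mem_hilbert_ball_iff_minkowski_gauge[of "y - x"] by (simp add: k_def)
  then have "hilbert_ball C x R
      = (\<lambda>y. y - x) -` {v. minkowski_gauge C x (- v) + k * minkowski_gauge C x v < k - 1}"
    by blast
  then show ?thesis
    using continuous_open_vimage[OF sublevel_open, of "\<lambda>y. y - x"] by (simp add: continuous_intros)
qed

lemma homothetic_tangent_ball_subset_hilbert_ball:
  assumes "0 < R"
  shows "(\<lambda>u. x + ((exp (2 * R) - 1) / (2 * R * exp (2 * R))) *\<^sub>R u) ` tangent_ball C x R
    \<subseteq> hilbert_ball C x R"
proof
  fix y assume "y \<in> (\<lambda>u. x + ((exp (2 * R) - 1) / (2 * R * exp (2 * R))) *\<^sub>R u) ` tangent_ball C x R"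
  then obtain u where u: "u \<in> tangent_ball C x R"
    and y: "y = x + ((exp (2 * R) - 1) / (2 * R * exp (2 * R))) *\<^sub>R u"
    by blast
  define k l a b where "k = exp (2 * R)" and "l = (k - 1) / (2 * R * k)"
    and "a = minkowski_gauge C x u" and "b = minkowski_gauge C x (- u)"
  have "1 < k" "0 < l" "0 \<le> a" "0 \<le> b"
    using assms by (simp_all add: k_def l_def a_def b_def minkowski_gauge_nonneg)
  have "b + k * a \<le> k * (a + b)"
    using \<open>1 < k\<close> \<open>0 \<le> b\<close> mult_right_mono[of 1 k b] by (simp add: algebra_simps)
  also have "\<dots> < k * (2 * R)"
    using u \<open>1 < k\<close> by (simp add: tangent_ball_eq_minkowski_gauge a_def b_def)
  finally have "l * (b + k * a) < l * (k * (2 * R))"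
    using \<open>0 < l\<close> by simp
  also have "\<dots> = k - 1"
    using assms \<open>1 < k\<close> by (simp add: l_def)
  finally have "minkowski_gauge C x (- (l *\<^sub>R u)) + k * minkowski_gauge C x (l *\<^sub>R u) < k - 1"
    using \<open>0 < l\<close> by (simp add: minkowski_gauge_scaleR a_def b_def algebra_simps flip: scaleR_minus_right)
  then show "y \<in> hilbert_ball C x R"
    by (simp add: y mem_hilbert_ball_iff_minkowski_gauge k_def l_def)
qed

lemma hilbert_ball_subset_homothetic_tangent_ball:
  assumes "0 < R"
  shows "hilbert_ball C x R
    \<subseteq> (\<lambda>u. x + ((exp (2 * R) - 1) / (2 * R)) *\<^sub>R u) ` tangent_ball C x R"
proof
  fix y assume y: "y \<in> hilbert_ball C x R"
  define k l v where "k = exp (2 * R)" and "l = (k - 1) / (2 * R)" and "v = y - x"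
  define a b where "a = minkowski_gauge C x v" and "b = minkowski_gauge C x (- v)"
  have "1 < k" "0 < l" "0 \<le> a" "0 \<le> b"
    using assms by (simp_all add: k_def l_def a_def b_def minkowski_gauge_nonneg)
  have "a + b \<le> b + k * a"
    using \<open>1 < k\<close> \<open>0 \<le> a\<close> mult_right_mono[of 1 k a] by simp
  also have "\<dots> < k - 1"
    using y mem_hilbert_ball_iff_minkowski_gauge[of v] by (simp add: v_def a_def b_def k_def)
  also have "\<dots> = l * (2 * R)"
    using assms by (simp add: l_def)
  finally have "minkowski_gauge C x (inverse l *\<^sub>R v) + minkowski_gauge C x (- (inverse l *\<^sub>R v)) < 2 * R"
    using \<open>0 < l\<close> by (simp add: minkowski_gauge_scaleR a_def b_def field_simps flip: scaleR_minus_right)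
  then have "inverse l *\<^sub>R v \<in> tangent_ball C x R"
    by (simp add: tangent_ball_eq_minkowski_gauge)
  then show "y \<in> (\<lambda>u. x + ((exp (2 * R) - 1) / (2 * R)) *\<^sub>R u) ` tangent_ball C x R"
    unfolding k_def[symmetric] l_def[symmetric]
    by (rule image_eqI[rotated]) (use \<open>0 < l\<close> in \<open>simp add: v_def\<close>)
qed

end

theorem proposition13:
  fixes C :: "'a::euclidean_space set" and x :: 'a and R :: real
  assumes "bounded C" and "open C" and "convex C"
    and "x \<in> C" and "R > 0"
  shows "((exp (2*R) - 1) / (2*R*exp (2*R))) ^ DIM('a)
           \<le> measure lebesgue (hilbert_ball C x R) / measure lebesgue (tangent_ball C x R)
       \<and> measure lebesgue (hilbert_ball C x R) / measure lebesgue (tangent_ball C x R)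
           \<le> ((exp (2*R) - 1) / (2*R)) ^ DIM('a)"
proof (rule measure_ratio_between_homothetic_copies)
  show "open (hilbert_ball C x R)" "open (tangent_ball C x R)" "bounded (tangent_ball C x R)"
    using assms by (simp_all add: open_hilbert_ball open_tangent_ball bounded_tangent_ball)
  show "tangent_ball C x R \<noteq> {}"
    using assms by (auto simp: tangent_ball_def finsler_norm_def)
  show "0 < (exp (2*R) - 1) / (2*R*exp (2*R))" "0 < (exp (2*R) - 1) / (2*R)"
    using assms by simp_all
  show "(\<lambda>u. x + ((exp (2*R) - 1) / (2*R*exp (2*R))) *\<^sub>R u) ` tangent_ball C x R \<subseteq> hilbert_ball C x R"
    using assms by (rule homothetic_tangent_ball_subset_hilbert_ball)
  show "hilbert_ball C x R \<subseteq> (\<lambda>u. x + ((exp (2*R) - 1) / (2*R)) *\<^sub>R u) ` tangent_ball C x R"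
    using assms by (rule hilbert_ball_subset_homothetic_tangent_ball)
qed

end
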